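(* Let $d\ge3$ and $p\colon S^{d-1}\to(0,\infty)$ Borel measurable with $\int_{S^{d-1}}p\,d\sigma_{d-1}\in(0,\infty)$. Assume there is a Borel set $C$ with $\sigma_{d-1}(C)>0$, $\inf_{x\in C}p(x)>0$ and $\sup_{x\in S^{d-1}}p(x)<\infty$, and set $\beta:=\frac{\inf_{y\in C}p(y)}{\sup_{y\in S^{d-1}}p(y)}$. Then for all $x\in S^{d-1}$ and all Borel $A\subseteq S^{d-1}$, $$\frac1{p(x)}\int_0^{p(x)}\int_{S^{d-2}_x}\int_{L(x,v,t)}\mathbb 1_A(\gamma_{(x,v)}(\theta))\,d\theta\,\mu_x(dv)\,dt\ \ge\ \beta\,\sigma_{d-1}(A\cap C).$$
   Context: $S^{d-1}$ is the unit sphere in $\mathbb R^d$, $\sigma_{d-1}$ its volume measure. For $x\in S^{d-1}$: $S^{d-2}_x:=\{v\in S^{d-1}:\langle v,x\rangle=0\}$ with natural volume measure $\mu_x$ (image of $\sigma_{d-2}$ under a linear isometry of $\mathbb R^{d-1}$ onto $x^\perp$). $\gamma_{(x,v)}(\theta):=\cos(\theta)x+\sin(\theta)v$, and $L(x,v,t):=\{\theta\in[0,2\pi):p(\gamma_{(x,v)}(\theta))>t\}$. *)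

theory Defs
  imports "HOL-Analysis.Analysis"
begin

text \<open>Surface (volume) measure on the unit sphere of a Euclidean space 'a of dimension d,
  defined as the cone measure: sigma(A) = d * lebesgue{y. 0 < |y| \<le> 1, y/|y| \<in> A}.\<close>
definition sphere_measure :: "'a::euclidean_space measure" where
  "sphere_measure =
     scale_measure (of_nat DIM('a))
       (distr (restrict_space lborel (cball 0 1 - {0}))
              (restrict_space borel (sphere (0::'a) 1))
              (\<lambda>y. y /\<^sub>R norm y))"

definition gam :: "'a::real_normed_vector \<Rightarrow> 'a \<Rightarrow> real \<Rightarrow> 'a" where
  "gam x v \<theta> = cos \<theta> *\<^sub>R x + sin \<theta> *\<^sub>R v"

definition Lset :: "('a::real_normed_vector \<Rightarrow> real) \<Rightarrow> 'a \<Rightarrow> 'a \<Rightarrow> real \<Rightarrow> real set" where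
  "Lset p x v t = {\<theta>. 0 \<le> \<theta> \<and> \<theta> < 2 * pi \<and> p (gam x v \<theta>) > t}"

text \<open>A linear isometry of 'b (playing the role of R^(d-1)) onto the orthogonal
  complement of x in 'a.\<close>
definition perp_isometry :: "'a::euclidean_space \<Rightarrow> ('b::euclidean_space \<Rightarrow> 'a) \<Rightarrow> bool" where
  "perp_isometry x T \<longleftrightarrow> linear T \<and> (\<forall>u. norm (T u) = norm u) \<and>
      range T = {v. v \<bullet> x = 0}"

text \<open>mu_x: image of sigma_(d-2) under such an isometry.\<close>
definition great_sphere_measure :: "('b::euclidean_space \<Rightarrow> 'a::euclidean_space) \<Rightarrow> 'a measure" where
  "great_sphere_measure T = distr (sphere_measure :: 'b measure) borel T"

end

theory Submission
  imports Defs
begin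

text \<open>For \<open>t < \<beta> p(x)\<close> every point of \<open>C\<close> lies above level \<open>t\<close>, so on the whole great
  circle the innermost integrand dominates the indicator of \<open>A \<inter> C\<close>; the left-hand side is
  therefore at least \<open>\<beta>\<close> times the integral of that indicator over all great circles through \<open>x\<close>.
  It remains to bound \<open>\<sigma>(B)\<close> by this circle integral. Write \<open>\<sigma>(B) = d \<lambda>(K)\<close> with \<open>K\<close> the
  unit cone over \<open>B\<close> and decompose \<open>\<lambda>\<close> along the lines \<open>s \<mapsto> s x + T u\<close>. For \<open>|u| = r\<close> such a
  line meets \<open>K\<close> in directions on the great circle through \<open>x\<close> and \<open>T u / r\<close>; the substitution
  \<open>s = r cot \<phi>\<close> followed by the rescaling \<open>u = (sin \<phi>) v\<close> bounds \<open>\<lambda>(K)\<close> by the integral over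
  half circles, and replacing \<open>T\<close> by \<open>-T\<close> gives the same bound by the other halves. Since
  \<open>d \<le> 2(d - 1)\<close> the constants fit.\<close>

lemma nn_integral_lborel_translate:
  fixes h :: "'a::euclidean_space \<Rightarrow> ennreal"
  assumes [measurable]: "h \<in> borel_measurable borel"
  shows "(\<integral>\<^sup>+z. h (t + z) \<partial>lborel) = (\<integral>\<^sup>+z. h z \<partial>lborel)"
  by (subst lborel_distr_plus[symmetric, of t]) (simp add: nn_integral_distr)

lemma nn_integral_lborel_reflect:
  fixes h :: "'a::euclidean_space \<Rightarrow> ennreal"
  assumes [measurable]: "h \<in> borel_measurable borel"
  shows "(\<integral>\<^sup>+z. h (t - z) \<partial>lborel) = (\<integral>\<^sup>+z. h z \<partial>lborel)"
proof -
  have "distr lborel borel (\<lambda>z. t + (-1) *\<^sub>R z) = (lborel :: 'a measure)"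
    using lborel_affine[of "-1" t] by (simp add: density_1)
  then have "(\<integral>\<^sup>+z. h z \<partial>lborel) = (\<integral>\<^sup>+z. h z \<partial>distr lborel borel (\<lambda>z. t + (-1) *\<^sub>R z))"
    by simp
  also have "\<dots> = (\<integral>\<^sup>+z. h (t - z) \<partial>lborel)"
    by (subst nn_integral_distr) auto
  finally show ?thesis by simp
qed

lemma linear_borel_measurable:
  fixes f :: "'a::euclidean_space \<Rightarrow> 'b::euclidean_space"
  shows "linear f \<Longrightarrow> f \<in> borel_measurable borel"
  by (intro borel_measurable_continuous_onI) (simp add: linear_continuous_on linear_linear)

text \<open>Fubini and translation invariance of both measures exchange the roles of \<open>M\<close> and
  \<open>lborel\<close>, as in the uniqueness proof for Haar measure.\<close>
lemma nn_integral_translation_invariant_swap: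
  fixes M :: "'a::euclidean_space measure" and f g :: "'a \<Rightarrow> ennreal"
  assumes "sigma_finite_measure M" and sets_M: "sets M = sets borel"
    and invariant: "\<And>t. distr M borel ((+) t) = M"
    and [measurable]: "f \<in> borel_measurable borel" "g \<in> borel_measurable borel"
  shows "(\<integral>\<^sup>+x. f x \<partial>M) * (\<integral>\<^sup>+y. g y \<partial>lborel) = (\<integral>\<^sup>+x. g x \<partial>M) * (\<integral>\<^sup>+y. f y \<partial>lborel)"
proof -
  interpret M: sigma_finite_measure M by fact
  interpret pair_sigma_finite M lborel ..
  have meas_M: "measurable M = measurable borel"
    by (intro ext measurable_cong_sets) (simp_all add: sets_M)
  have meas_pair: "measurable (M \<Otimes>\<^sub>M lborel) = measurable (borel \<Otimes>\<^sub>M borel)"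
    by (intro ext measurable_cong_sets sets_pair_measure_cong) (simp_all add: sets_M)
  have translate_M: "(\<integral>\<^sup>+x. h (x + z) \<partial>M) = (\<integral>\<^sup>+x. h x \<partial>M)"
    if [measurable]: "h \<in> borel_measurable borel" for h z
  proof -
    have "(\<integral>\<^sup>+x. h x \<partial>M) = (\<integral>\<^sup>+x. h x \<partial>distr M borel ((+) z))"
      by (simp add: invariant)
    also have "\<dots> = (\<integral>\<^sup>+x. h (x + z) \<partial>M)"
      by (subst nn_integral_distr) (auto simp: meas_M add.commute)
    finally show ?thesis ..
  qed
  have "(\<integral>\<^sup>+x. f x \<partial>M) * (\<integral>\<^sup>+y. g y \<partial>lborel) = (\<integral>\<^sup>+x. (\<integral>\<^sup>+z. f x * g (x + z) \<partial>lborel) \<partial>M)"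
    by (simp add: meas_M nn_integral_multc nn_integral_cmult nn_integral_lborel_translate)
  also have "\<dots> = (\<integral>\<^sup>+z. (\<integral>\<^sup>+x. f x * g (x + z) \<partial>M) \<partial>lborel)"
    by (rule Fubini'[symmetric]) (unfold meas_pair, measurable)
  also have "\<dots> = (\<integral>\<^sup>+z. (\<integral>\<^sup>+x. f (x - z) * g x \<partial>M) \<partial>lborel)"
  proof (rule nn_integral_cong)
    fix z
    show "(\<integral>\<^sup>+x. f x * g (x + z) \<partial>M) = (\<integral>\<^sup>+x. f (x - z) * g x \<partial>M)"
      using translate_M[of "\<lambda>x. f (x - z) * g x" z] by simp
  qed
  also have "\<dots> = (\<integral>\<^sup>+x. (\<integral>\<^sup>+z. f (x - z) * g x \<partial>lborel) \<partial>M)"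
    by (rule Fubini') (unfold meas_pair, measurable)
  also have "\<dots> = (\<integral>\<^sup>+x. g x * (\<integral>\<^sup>+z. f (x - z) \<partial>lborel) \<partial>M)"
    by (intro nn_integral_cong) (simp add: nn_integral_cmult[symmetric] mult.commute)
  also have "\<dots> = (\<integral>\<^sup>+x. g x \<partial>M) * (\<integral>\<^sup>+y. f y \<partial>lborel)"
    by (simp add: meas_M nn_integral_multc nn_integral_lborel_reflect)
  finally show ?thesis .
qed

lemma lborel_eqI_translation_invariant:
  fixes M :: "'a::euclidean_space measure"
  assumes "sigma_finite_measure M" and sets_M: "sets M = sets borel"
    and invariant: "\<And>t. distr M borel ((+) t) = M"
    and ball: "emeasure M (cball 0 1) = emeasure lborel (cball (0::'a) 1)"
  shows "M = lborel"
proof (rule measure_eqI)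
  show "sets M = sets lborel" by (simp add: sets_M)
  fix A assume "A \<in> sets M"
  then have [measurable]: "A \<in> sets borel" by (simp add: sets_M)
  define V where "V = emeasure lborel (cball (0::'a) 1)"
  have "unit_ball_vol (real DIM('a)) \<noteq> 0"
    using unit_ball_vol_pos[of "real DIM('a)"] by linarith
  then have V: "V \<noteq> 0" "V \<noteq> \<infinity>"
    by (simp_all add: V_def emeasure_cball)
  have "(\<integral>\<^sup>+x. indicator A x \<partial>M) * (\<integral>\<^sup>+y. indicator (cball (0::'a) 1) y \<partial>lborel) =
        (\<integral>\<^sup>+x. indicator (cball 0 1) x \<partial>M) * (\<integral>\<^sup>+y. indicator A y \<partial>lborel)"
    by (intro nn_integral_translation_invariant_swap[OF assms(1-3)] borel_measurable_indicator) auto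
  then have "V * emeasure M A = V * emeasure lborel A"
    using ball \<open>A \<in> sets M\<close> by (simp add: V_def sets_M mult.commute)
  with V show "emeasure M A = emeasure lborel A"
    by (auto simp: ennreal_mult_cancel_left)
qed

lemma distr_lborel_linear_isometry:
  fixes L :: "'a::euclidean_space \<Rightarrow> 'b::euclidean_space"
  assumes "linear L" and norm_L: "\<And>w. norm (L w) = norm w" and "surj L"
    and "DIM('a) = DIM('b)"
  shows "distr lborel borel L = lborel"
proof (rule lborel_eqI_translation_invariant)
  have [measurable]: "L \<in> borel_measurable borel"
    using \<open>linear L\<close> by (rule linear_borel_measurable)
  have emeasure_ball: "emeasure (distr lborel borel L) (cball 0 r) = emeasure lborel (cball (0::'a) r)" for r
  proof -
    have "L -` cball 0 r = cball 0 r" by (auto simp: norm_L)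
    then show ?thesis by (subst emeasure_distr) auto
  qed
  then show "emeasure (distr lborel borel L) (cball 0 1) = emeasure lborel (cball (0::'b) 1)"
    using \<open>DIM('a) = DIM('b)\<close> by (simp add: emeasure_cball)
  show "sigma_finite_measure (distr lborel borel L)"
  proof (unfold_locales, intro exI conjI)
    show "countable (range (\<lambda>n::nat. cball (0::'b) (real n)))" by simp
    show "\<Union> (range (\<lambda>n::nat. cball (0::'b) (real n))) = space (distr lborel borel L)"
      by (auto simp: real_arch_simple)
    show "\<forall>a\<in>range (\<lambda>n::nat. cball (0::'b) (real n)). emeasure (distr lborel borel L) a \<noteq> \<infinity>"
      using emeasure_lborel_cball_finite[of "0::'a"] by (auto simp: emeasure_ball less_top)
  qed auto
  show "distr (distr lborel borel L) borel ((+) t) = distr lborel borel L" for t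
  proof -
    obtain t' where "t = L t'" using \<open>surj L\<close> by (metis surjD)
    then have "(+) t \<circ> L = L \<circ> (+) t'"
      using \<open>linear L\<close> by (auto simp: linear_add)
    then have "distr (distr lborel borel L) borel ((+) t) = distr (distr lborel borel ((+) t')) borel L"
      by (simp add: distr_distr)
    then show ?thesis by (simp add: lborel_distr_plus)
  qed
qed auto

definition unit_cone :: "'a::real_normed_vector set \<Rightarrow> 'a set" where
  "unit_cone B = {y \<in> cball 0 1 - {0}. y /\<^sub>R norm y \<in> B}"

lemma sets_unit_cone [measurable]:
  fixes B :: "'a::euclidean_space set"
  assumes [measurable]: "B \<in> sets borel"
  shows "unit_cone B \<in> sets borel"
proof -
  have "(\<lambda>y::'a. y /\<^sub>R norm y) \<in> borel_measurable borel" by measurable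
  then have "(\<lambda>y. y /\<^sub>R norm y) -` B \<inter> space borel \<in> sets borel"
    by (rule measurable_sets) fact
  then have "(cball 0 1 - {0}) \<inter> ((\<lambda>y. y /\<^sub>R norm y) -` B \<inter> space borel) \<in> sets borel"
    by (intro sets.Int) auto
  also have "(cball 0 1 - {0}) \<inter> ((\<lambda>y. y /\<^sub>R norm y) -` B \<inter> space borel) = unit_cone B"
    by (auto simp: unit_cone_def)
  finally show ?thesis .
qed

lemma sets_sphere_measure:
  "sets (sphere_measure :: 'a::euclidean_space measure) = sets (restrict_space borel (sphere 0 1))"
  by (simp add: sphere_measure_def)

lemma sets_sphere_measureD:
  assumes "A \<in> sets (sphere_measure :: 'a::euclidean_space measure)"
  shows "A \<in> sets borel" "A \<subseteq> sphere 0 1"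
  using assms by (auto simp: sets_sphere_measure sets_restrict_space_iff)

lemma measurable_normalize:
  "(\<lambda>y::'a::euclidean_space. y /\<^sub>R norm y) \<in>
     restrict_space lborel (cball 0 1 - {0}) \<rightarrow>\<^sub>M restrict_space borel (sphere 0 1)"
  by (rule measurable_restrict_space2) (auto intro!: measurable_restrict_space1 simp: norm_divide)

lemma emeasure_sphere_measure:
  fixes B :: "'a::euclidean_space set"
  assumes "B \<in> sets borel" "B \<subseteq> sphere 0 1"
  shows "emeasure sphere_measure B = of_nat DIM('a) * emeasure lborel (unit_cone B)"
proof -
  have "B \<in> sets (restrict_space borel (sphere 0 1))"
    using assms by (auto simp: sets_restrict_space_iff)
  moreover have "(\<lambda>y. y /\<^sub>R norm y) -` B \<inter> (cball 0 1 - {0}) = unit_cone B"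
    by (auto simp: unit_cone_def)
  moreover have "unit_cone B \<subseteq> cball 0 1 - {0}"
    by (auto simp: unit_cone_def)
  ultimately show ?thesis
    using \<open>B \<in> sets borel\<close>
    by (simp add: sphere_measure_def emeasure_distr[OF measurable_normalize]
        space_restrict_space emeasure_restrict_space)
qed

lemma nn_integral_great_sphere_measure:
  fixes T :: "'b::euclidean_space \<Rightarrow> 'a::euclidean_space"
  assumes "linear T" and [measurable]: "h \<in> borel_measurable borel"
  shows "(\<integral>\<^sup>+v. h v \<partial>great_sphere_measure T) =
     of_nat DIM('b) * (\<integral>\<^sup>+u. indicator (cball 0 1 - {0}) u * h (T (u /\<^sub>R norm u)) \<partial>lborel)"
proof -
  have [measurable]: "T \<in> borel_measurable borel"
    using \<open>linear T\<close> by (rule linear_borel_measurable)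
  have meas_sphere: "measurable (sphere_measure :: 'b measure) = measurable (restrict_space borel (sphere 0 1))"
    by (intro ext measurable_cong_sets) (simp_all add: sets_sphere_measure)
  have hT: "(\<lambda>v. h (T v)) \<in> borel_measurable (restrict_space borel (sphere (0::'b) 1))"
    by (rule measurable_restrict_space1) simp
  have "(\<integral>\<^sup>+v. h v \<partial>great_sphere_measure T) = (\<integral>\<^sup>+v. h (T v) \<partial>(sphere_measure :: 'b measure))"
    unfolding great_sphere_measure_def
    by (subst nn_integral_distr) (auto simp: meas_sphere intro: measurable_restrict_space1)
  also have "\<dots> = of_nat DIM('b) * (\<integral>\<^sup>+u. h (T (u /\<^sub>R norm u)) \<partial>restrict_space lborel (cball 0 1 - {0}))"
    unfolding sphere_measure_def
    by (simp add: nn_integral_scale_measure nn_integral_distr[OF measurable_normalize] hT)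
  finally show ?thesis
    by (simp add: nn_integral_restrict_space mult.commute)
qed

lemma perp_isometryD:
  assumes "perp_isometry x T"
  shows "linear T" "norm (T u) = norm u" "T u \<bullet> x = 0" "range T = {v. v \<bullet> x = 0}"
  using assms unfolding perp_isometry_def by auto

lemma perp_isometry_uminus:
  assumes "perp_isometry x T"
  shows "perp_isometry x (\<lambda>u. - T u)"
proof -
  have "range (\<lambda>u. - T u) = range (\<lambda>u. T (- u))"
    by (simp add: linear_neg[OF perp_isometryD(1)[OF assms]])
  also have "\<dots> = range T"
  proof (intro equalityI subsetI)
    fix v assume "v \<in> range T"
    then obtain u where "v = T u" by blast
    then have "v = T (- (- u))" by simp
    then show "v \<in> range (\<lambda>u. T (- u))" by blast
  qed auto
  finally show ?thesis
    using perp_isometryD[OF assms] by (simp add: perp_isometry_def linear_compose_neg)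
qed

lemma distr_lborel_perp_coordinates:
  fixes x :: "'a::euclidean_space" and T :: "'b::euclidean_space \<Rightarrow> 'a"
  assumes "norm x = 1" and T: "perp_isometry x T" and dim: "DIM('a) = DIM('b) + 1"
  shows "distr lborel borel (\<lambda>(u, s). s *\<^sub>R x + T u) = lborel"
proof (rule distr_lborel_linear_isometry)
  note T_props = perp_isometryD[OF T]
  show "linear (\<lambda>(u, s). s *\<^sub>R x + T u)"
    by (rule linearI) (auto simp: linear_add[OF T_props(1)] linear_scale[OF T_props(1)] algebra_simps)
  show "norm ((\<lambda>(u, s). s *\<^sub>R x + T u) w) = norm w" for w
  proof (cases w)
    case (Pair u s)
    have "orthogonal (s *\<^sub>R x) (T u)"
      using T_props(3) by (simp add: orthogonal_def inner_commute)
    then have "(norm (s *\<^sub>R x + T u))\<^sup>2 = (norm w)\<^sup>2"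
      using \<open>norm x = 1\<close> T_props(2) by (simp add: Pair norm_add_Pythagorean norm_Pair power_mult_distrib)
    then show ?thesis
      by (simp add: Pair)
  qed
  show "surj (\<lambda>(u, s). s *\<^sub>R x + T u)"
  proof (rule surjI)
    fix y
    have "y - (y \<bullet> x) *\<^sub>R x \<in> range T"
      using \<open>norm x = 1\<close> by (simp add: T_props(4) inner_diff_left norm_eq_1)
    then show "(\<lambda>(u, s). s *\<^sub>R x + T u) (inv T (y - (y \<bullet> x) *\<^sub>R x), y \<bullet> x) = y"
      by (simp add: f_inv_into_f)
  qed
qed (use dim in simp)

lemma emeasure_lborel_perp_fibres:
  fixes x :: "'a::euclidean_space" and T :: "'b::euclidean_space \<Rightarrow> 'a"
  assumes "norm x = 1" and T: "perp_isometry x T" and "DIM('a) = DIM('b) + 1"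
    and [measurable]: "K \<in> sets borel"
  shows "emeasure lborel K = (\<integral>\<^sup>+u. (\<integral>\<^sup>+s. indicator K (s *\<^sub>R x + T u) \<partial>lborel) \<partial>lborel)"
proof -
  define L :: "'b \<times> real \<Rightarrow> 'a" where "L = (\<lambda>(u, s). s *\<^sub>R x + T u)"
  have [measurable]: "T \<in> borel_measurable borel"
    using perp_isometryD(1)[OF T] by (rule linear_borel_measurable)
  then have L_meas [measurable]: "L \<in> borel_measurable borel"
    unfolding L_def by (subst borel_prod[symmetric]) measurable
  have "emeasure lborel K = emeasure (distr lborel borel L) K"
    using distr_lborel_perp_coordinates[OF assms(1-3)] by (simp add: L_def)
  also have "\<dots> = emeasure (lborel \<Otimes>\<^sub>M lborel) (L -` K)"
    by (subst emeasure_distr) (auto simp: lborel_prod)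
  also have "\<dots> = (\<integral>\<^sup>+u. emeasure lborel (Pair u -` (L -` K)) \<partial>lborel)"
  proof (rule lborel.emeasure_pair_measure_alt)
    have "L -` K \<in> sets borel"
      using measurable_sets[OF L_meas \<open>K \<in> sets borel\<close>] by simp
    then show "L -` K \<in> sets (lborel \<Otimes>\<^sub>M lborel)"
      by (simp only: lborel_prod sets_lborel)
  qed
  also have "\<dots> = (\<integral>\<^sup>+u. (\<integral>\<^sup>+s. indicator K (s *\<^sub>R x + T u) \<partial>lborel) \<partial>lborel)"
  proof (rule nn_integral_cong)
    fix u
    have "{s::real. s *\<^sub>R x + T u \<in> K} \<in> sets borel"
      by measurable
    moreover have "Pair u -` (L -` K) = {s. s *\<^sub>R x + T u \<in> K}"
      by (auto simp: L_def)
    ultimately show "emeasure lborel (Pair u -` (L -` K)) = (\<integral>\<^sup>+s. indicator K (s *\<^sub>R x + T u) \<partial>lborel)"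
      by (simp add: indicator_def flip: nn_integral_indicator)
  qed
  finally show ?thesis .
qed

lemma norm_orthonormal_combination:
  assumes "norm x = 1" "norm w = 1" "w \<bullet> x = 0"
  shows "norm (s *\<^sub>R x + r *\<^sub>R w) = sqrt (s\<^sup>2 + r\<^sup>2)"
proof -
  have "orthogonal (s *\<^sub>R x) (r *\<^sub>R w)"
    using assms(3) by (simp add: orthogonal_def inner_commute)
  then have "(norm (s *\<^sub>R x + r *\<^sub>R w))\<^sup>2 = s\<^sup>2 + r\<^sup>2"
    using assms(1,2) by (simp add: norm_add_Pythagorean power_mult_distrib)
  then show ?thesis
    by (simp add: real_sqrt_unique)
qed

lemma norm_gam:
  assumes "norm x = 1" "norm w = 1" "w \<bullet> x = 0"
  shows "norm (gam x w \<phi>) = 1"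
  using norm_orthonormal_combination[OF assms] by (simp add: gam_def)

lemma gam_uminus: "gam x (- w) \<phi> = gam x w (2 * pi - \<phi>)"
  by (simp add: gam_def sin_diff cos_diff)

lemma sin_ge_arcsin:
  assumes "0 \<le> r" "r \<le> 1" and "arcsin r \<le> \<phi>" "\<phi> \<le> pi - arcsin r"
  shows "r \<le> sin \<phi>"
proof -
  have "0 \<le> arcsin r" "arcsin r \<le> pi / 2"
    using assms arcsin_le_arcsin[of 0 r] arcsin_le_arcsin[of r 1] by auto
  then have "sin (arcsin r) \<le> sin (if \<phi> \<le> pi / 2 then \<phi> else pi - \<phi>)"
    using assms by (intro sin_monotone_2pi_le) auto
  then show ?thesis
    using assms by (simp split: if_splits)
qed

lemma has_real_derivative_cot:
  assumes "sin \<phi> \<noteq> 0"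
  shows "((\<lambda>\<phi>. - (r * cos \<phi> / sin \<phi>)) has_real_derivative r / (sin \<phi>)\<^sup>2) (at \<phi>)"
proof -
  have "((\<lambda>\<phi>. - (r * cos \<phi> / sin \<phi>)) has_real_derivative
      - ((- (r * sin \<phi>) * sin \<phi> - r * cos \<phi> * cos \<phi>) / (sin \<phi> * sin \<phi>))) (at \<phi>)"
    using assms by (auto intro!: derivative_eq_intros)
  moreover have "- ((- (r * sin \<phi>) * sin \<phi> - r * cos \<phi> * cos \<phi>) / (sin \<phi> * sin \<phi>)) = r / (sin \<phi>)\<^sup>2"
  proof -
    have "- (- (r * sin \<phi>) * sin \<phi> - r * cos \<phi> * cos \<phi>) = r"
      by (simp add: algebra_simps flip: distrib_left)
    then show ?thesis by (simp only: power2_eq_square minus_divide_left)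
  qed
  ultimately show ?thesis by simp
qed

lemma nn_integral_cot_substitution:
  fixes f :: "real \<Rightarrow> real"
  assumes "0 < r" "r \<le> 1" and [measurable]: "f \<in> borel_measurable borel"
  shows "(\<integral>\<^sup>+s. ennreal (f s * indicator {- sqrt (1 - r\<^sup>2)..sqrt (1 - r\<^sup>2)} s) \<partial>lborel) =
    (\<integral>\<^sup>+\<phi>. ennreal (f (- (r * cos \<phi> / sin \<phi>)) * (r / (sin \<phi>)\<^sup>2) *
       indicator {arcsin r..pi - arcsin r} \<phi>) \<partial>lborel)"
proof -
  define a where "a = arcsin r"
  have a: "0 < a" "a \<le> pi / 2" "sin a = r" "cos a = sqrt (1 - r\<^sup>2)"
    using assms arcsin_less_arcsin[of 0 r] arcsin_le_arcsin[of r 1]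
    by (auto simp: a_def cos_arcsin)
  have sin_pos: "0 < sin \<phi>" if "\<phi> \<in> {a..pi - a}" for \<phi>
    using sin_ge_arcsin[of r \<phi>] that assms by (auto simp: a_def)
  have "(\<integral>\<^sup>+s. ennreal (f s * indicator {- (r * cos a / sin a)..- (r * cos (pi - a) / sin (pi - a))} s) \<partial>lborel) =
    (\<integral>\<^sup>+\<phi>. ennreal (f (- (r * cos \<phi> / sin \<phi>)) * (r / (sin \<phi>)\<^sup>2) * indicator {a..pi - a} \<phi>) \<partial>lborel)"
  proof (rule nn_integral_substitution)
    show "continuous_on {a..pi - a} (\<lambda>\<phi>. r / (sin \<phi>)\<^sup>2)"
      using sin_pos by (intro continuous_intros) force
    fix \<phi> assume "\<phi> \<in> {a..pi - a}"
    with sin_pos[OF this] show "((\<lambda>\<phi>. - (r * cos \<phi> / sin \<phi>)) has_real_derivative r / (sin \<phi>)\<^sup>2) (at \<phi>)"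
      by (simp add: has_real_derivative_cot)
    show "0 \<le> r / (sin \<phi>)\<^sup>2"
      using \<open>0 < r\<close> by simp
  qed (use a in \<open>simp_all add: set_borel_measurable_def\<close>)
  then show ?thesis
    using a assms by (simp add: a_def)
qed

lemma unit_cone_line_bound:
  assumes "norm x = 1" "norm w = 1" "w \<bullet> x = 0" and "s *\<^sub>R x + r *\<^sub>R w \<in> unit_cone B"
  shows "s\<^sup>2 + r\<^sup>2 \<le> 1"
  using assms(4) by (simp add: unit_cone_def norm_orthonormal_combination[OF assms(1-3)])

lemma unit_cone_line_cot_iff:
  assumes "norm x = 1" "norm w = 1" "w \<bullet> x = 0" and "0 < r" "r \<le> sin \<phi>"
  shows "(r * cos \<phi> / sin \<phi>) *\<^sub>R x + r *\<^sub>R w \<in> unit_cone B \<longleftrightarrow> gam x w \<phi> \<in> B"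
proof -
  have "(r * cos \<phi> / sin \<phi>) *\<^sub>R x + r *\<^sub>R w = (r / sin \<phi>) *\<^sub>R gam x w \<phi>"
    using assms(4,5) by (simp add: gam_def scaleR_add_right)
  then show ?thesis
    using assms norm_gam[OF assms(1-3), of \<phi>] by (auto simp: unit_cone_def)
qed

lemma nn_integral_line_unit_cone_le:
  fixes x w :: "'a::euclidean_space"
  assumes orthonormal: "norm x = 1" "norm w = 1" "w \<bullet> x = 0"
    and "0 < r" and [measurable]: "B \<in> sets borel"
  shows "(\<integral>\<^sup>+s. indicator (unit_cone B) (s *\<^sub>R x + r *\<^sub>R w) \<partial>lborel) \<le>
    (\<integral>\<^sup>+\<phi>. indicator {0<..<pi} \<phi> * of_bool (r \<le> sin \<phi>) * indicator B (gam x w \<phi>) *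
       ennreal (r / (sin \<phi>)\<^sup>2) \<partial>lborel)" (is "_ \<le> ?rhs")
proof (cases "r \<le> 1")
  case False
  then have "1 < s\<^sup>2 + r\<^sup>2" for s
    using one_less_power[of r 2] zero_le_power2[of s] by linarith
  then have "s *\<^sub>R x + r *\<^sub>R w \<notin> unit_cone B" for s
    using unit_cone_line_bound[OF orthonormal] by (meson not_le)
  then show ?thesis by simp
next
  case True
  define f where "f s = (indicator (unit_cone B) ((- s) *\<^sub>R x + r *\<^sub>R w) :: real)" for s
  have [measurable]: "f \<in> borel_measurable borel" unfolding f_def by measurable
  have "(\<integral>\<^sup>+s. indicator (unit_cone B) (s *\<^sub>R x + r *\<^sub>R w) \<partial>lborel) = (\<integral>\<^sup>+s. ennreal (f s) \<partial>lborel)"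
    using nn_integral_lborel_reflect[of "\<lambda>s. indicator (unit_cone B) (s *\<^sub>R x + r *\<^sub>R w)" 0]
    by (simp add: f_def ennreal_indicator)
  also have "\<dots> = (\<integral>\<^sup>+s. ennreal (f s * indicator {- sqrt (1 - r\<^sup>2)..sqrt (1 - r\<^sup>2)} s) \<partial>lborel)"
  proof (intro nn_integral_cong)
    fix s
    have "\<bar>s\<bar> \<le> sqrt (1 - r\<^sup>2)" if "f s \<noteq> 0"
      using that unit_cone_line_bound[OF orthonormal, of "- s" r B] real_le_rsqrt[of "\<bar>s\<bar>"]
      by (simp add: f_def indicator_def)
    then show "ennreal (f s) = ennreal (f s * indicator {- sqrt (1 - r\<^sup>2)..sqrt (1 - r\<^sup>2)} s)"
      by (cases "f s = 0") (auto simp: abs_le_iff)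
  qed
  also have "\<dots> = (\<integral>\<^sup>+\<phi>. ennreal (f (- (r * cos \<phi> / sin \<phi>)) * (r / (sin \<phi>)\<^sup>2) *
     indicator {arcsin r..pi - arcsin r} \<phi>) \<partial>lborel)"
    using \<open>0 < r\<close> True by (rule nn_integral_cot_substitution) measurable
  also have "\<dots> \<le> ?rhs"
  proof (intro nn_integral_mono)
    fix \<phi>
    have "r \<le> sin \<phi>" "\<phi> \<in> {0<..<pi}" if "\<phi> \<in> {arcsin r..pi - arcsin r}"
      using that \<open>0 < r\<close> True sin_ge_arcsin[of r \<phi>] arcsin_less_arcsin[of 0 r] arcsin_le_arcsin[of r 1]
      by auto
    then show "ennreal (f (- (r * cos \<phi> / sin \<phi>)) * (r / (sin \<phi>)\<^sup>2) * indicator {arcsin r..pi - arcsin r} \<phi>) \<le>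
      indicator {0<..<pi} \<phi> * of_bool (r \<le> sin \<phi>) * indicator B (gam x w \<phi>) * ennreal (r / (sin \<phi>)\<^sup>2)"
      using unit_cone_line_cot_iff[OF orthonormal \<open>0 < r\<close>, of \<phi> B]
      by (simp add: f_def indicator_def ennreal_mult'')
  qed
  finally show ?thesis .
qed

text \<open>Rescaling \<open>u = c v\<close> costs a Jacobian \<open>c ^ DIM('b) \<le> c\<close>, which absorbs the weight.\<close>
lemma nn_integral_weighted_small_ball_le:
  fixes h :: "'b::euclidean_space \<Rightarrow> ennreal"
  assumes "0 < c" "c \<le> 1" and [measurable]: "h \<in> borel_measurable borel"
    and homogeneous: "\<And>u. u \<noteq> 0 \<Longrightarrow> h u = h (u /\<^sub>R norm u)"
  shows "(\<integral>\<^sup>+u. indicator (cball 0 c - {0}) u * h u * ennreal (norm u / c\<^sup>2) \<partial>lborel) \<le>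
    (\<integral>\<^sup>+v. indicator (cball 0 1 - {0}) v * h v \<partial>lborel)"
proof -
  define F where "F u = indicator (cball 0 c - {0}) u * h u * ennreal (norm u / c\<^sup>2)" for u :: 'b
  have [measurable]: "cball (0::'b) c - {0} \<in> sets borel"
    by auto
  have [measurable]: "F \<in> borel_measurable borel"
    unfolding F_def by measurable
  have "(\<integral>\<^sup>+u. F u \<partial>lborel) = (\<integral>\<^sup>+u. F u \<partial>density (distr lborel borel (\<lambda>v. 0 + c *\<^sub>R v)) (\<lambda>_. \<bar>c\<bar> ^ DIM('b)))"
    using lborel_affine[of c "0::'b"] \<open>0 < c\<close> by simp
  also have "\<dots> = (\<integral>\<^sup>+v. ennreal (c ^ DIM('b)) * F (c *\<^sub>R v) \<partial>lborel)"
    using \<open>0 < c\<close> by (simp add: nn_integral_density nn_integral_distr)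
  also have "\<dots> \<le> (\<integral>\<^sup>+v. indicator (cball 0 1 - {0}) v * h v \<partial>lborel)"
  proof (rule nn_integral_mono)
    fix v :: 'b
    show "ennreal (c ^ DIM('b)) * F (c *\<^sub>R v) \<le> indicator (cball 0 1 - {0}) v * h v"
    proof (cases "v \<in> cball 0 1 - {0}")
      case True
      have "h (c *\<^sub>R v) = h v"
        using homogeneous[of v] homogeneous[of "c *\<^sub>R v"] True \<open>0 < c\<close> by (simp add: field_simps)
      moreover have "c ^ DIM('b) * (norm (c *\<^sub>R v) / c\<^sup>2) \<le> 1"
      proof -
        have "c ^ DIM('b) \<le> c ^ 1"
          using assms(1,2) by (intro power_decreasing) (auto simp: DIM_positive Suc_leI)
        then have "c ^ DIM('b) * (norm (c *\<^sub>R v) / c\<^sup>2) \<le> c * (norm (c *\<^sub>R v) / c\<^sup>2)"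
          by (intro mult_right_mono) auto
        also have "\<dots> = norm v"
          using \<open>0 < c\<close> by (simp add: power2_eq_square)
        finally show ?thesis using True by simp
      qed
      ultimately show ?thesis
        using True \<open>0 < c\<close>
        by (simp add: F_def mult.assoc mult.left_commute[of "ennreal _"] ennreal_mult'[symmetric]
            mult_left_le ennreal_le_1)
    qed (use \<open>0 < c\<close> in \<open>simp add: F_def\<close>)
  qed
  finally show ?thesis
    by (simp add: F_def)
qed

lemma nn_integral_perp_line_unit_cone_le:
  fixes x :: "'a::euclidean_space" and T :: "'b::euclidean_space \<Rightarrow> 'a"
  assumes "norm x = 1" and T: "perp_isometry x T" and "u \<noteq> 0" and [measurable]: "B \<in> sets borel"
  shows "(\<integral>\<^sup>+s. indicator (unit_cone B) (s *\<^sub>R x + T u) \<partial>lborel) \<le>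
    (\<integral>\<^sup>+\<phi>. indicator {0<..<pi} \<phi> * of_bool (norm u \<le> sin \<phi>) * indicator B (gam x (T u /\<^sub>R norm u) \<phi>) *
       ennreal (norm u / (sin \<phi>)\<^sup>2) \<partial>lborel)"
proof -
  have "norm (T u /\<^sub>R norm u) = 1" "(T u /\<^sub>R norm u) \<bullet> x = 0"
    using \<open>u \<noteq> 0\<close> perp_isometryD[OF T] by simp_all
  from nn_integral_line_unit_cone_le[OF \<open>norm x = 1\<close> this, of "norm u" B]
  show ?thesis
    using \<open>u \<noteq> 0\<close> by simp
qed

lemma emeasure_unit_cone_le_half_circles:
  fixes x :: "'a::euclidean_space" and T :: "'b::euclidean_space \<Rightarrow> 'a"
  assumes "norm x = 1" and T: "perp_isometry x T" and "DIM('a) = DIM('b) + 1"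
    and [measurable]: "B \<in> sets borel"
  shows "emeasure lborel (unit_cone B) \<le>
    (\<integral>\<^sup>+\<phi>. indicator {0<..<pi} \<phi> *
       (\<integral>\<^sup>+v. indicator (cball 0 1 - {0}) v * indicator B (gam x (T v /\<^sub>R norm v) \<phi>) \<partial>lborel) \<partial>lborel)"
    (is "_ \<le> ?rhs")
proof -
  have lin: "linear T"
    using perp_isometryD(1)[OF T] .
  then have [measurable]: "T \<in> borel_measurable borel"
    by (rule linear_borel_measurable)
  define \<Phi> where "\<Phi> u \<phi> = indicator {0<..<pi} \<phi> * of_bool (u \<noteq> 0 \<and> norm u \<le> sin \<phi>) *
    indicator B (gam x (T u /\<^sub>R norm u) \<phi>) * ennreal (norm u / (sin \<phi>)\<^sup>2)" for u :: 'b and \<phi> :: real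
  have "emeasure lborel (unit_cone B) = (\<integral>\<^sup>+u. (\<integral>\<^sup>+s. indicator (unit_cone B) (s *\<^sub>R x + T u) \<partial>lborel) \<partial>lborel)"
    using assms by (intro emeasure_lborel_perp_fibres) auto
  also have "\<dots> \<le> (\<integral>\<^sup>+u. (\<integral>\<^sup>+\<phi>. \<Phi> u \<phi> \<partial>lborel) \<partial>lborel)"
  proof (rule nn_integral_mono_AE)
    show "AE u in lborel. (\<integral>\<^sup>+s. indicator (unit_cone B) (s *\<^sub>R x + T u) \<partial>lborel) \<le> (\<integral>\<^sup>+\<phi>. \<Phi> u \<phi> \<partial>lborel)"
      using AE_lborel_singleton[of "0::'b"]
    proof eventually_elim
      case (elim u)
      then show ?case
        using nn_integral_perp_line_unit_cone_le[OF \<open>norm x = 1\<close> T elim \<open>B \<in> sets borel\<close>]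
        by (simp add: \<Phi>_def)
    qed
  qed
  also have "\<dots> = (\<integral>\<^sup>+\<phi>. (\<integral>\<^sup>+u. \<Phi> u \<phi> \<partial>lborel) \<partial>lborel)"
    by (rule lborel_pair.Fubini'[symmetric]) (unfold \<Phi>_def gam_def, measurable)
  also have "\<dots> \<le> ?rhs"
  proof (rule nn_integral_mono)
    fix \<phi> :: real
    show "(\<integral>\<^sup>+u. \<Phi> u \<phi> \<partial>lborel) \<le> indicator {0<..<pi} \<phi> *
       (\<integral>\<^sup>+v. indicator (cball 0 1 - {0}) v * indicator B (gam x (T v /\<^sub>R norm v) \<phi>) \<partial>lborel)"
    proof (cases "\<phi> \<in> {0<..<pi}")
      case True
      have "(\<integral>\<^sup>+u. \<Phi> u \<phi> \<partial>lborel) = (\<integral>\<^sup>+u. indicator (cball 0 (sin \<phi>) - {0}) u *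
          indicator B (gam x (T u /\<^sub>R norm u) \<phi>) * ennreal (norm u / (sin \<phi>)\<^sup>2) \<partial>lborel)"
        using True by (intro nn_integral_cong) (simp add: \<Phi>_def indicator_def)
      also have "\<dots> \<le> (\<integral>\<^sup>+v. indicator (cball 0 1 - {0}) v * indicator B (gam x (T v /\<^sub>R norm v) \<phi>) \<partial>lborel)"
        using True sin_gt_zero[of \<phi>]
        by (intro nn_integral_weighted_small_ball_le)
           (auto simp: gam_def linear_scale[OF lin] intro!: measurable_compose[OF _ borel_measurable_indicator])
      finally show ?thesis using True by simp
    qed (simp add: \<Phi>_def)
  qed
  finally show ?thesis .
qed

text \<open>The reflection \<open>T \<mapsto> -T\<close> turns the upper half circles into the lower ones.\<close>
lemma emeasure_unit_cone_le_circles: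
  fixes x :: "'a::euclidean_space" and T :: "'b::euclidean_space \<Rightarrow> 'a"
  assumes "norm x = 1" and T: "perp_isometry x T" and "DIM('a) = DIM('b) + 1"
    and [measurable]: "B \<in> sets borel"
  shows "2 * emeasure lborel (unit_cone B) \<le>
    (\<integral>\<^sup>+\<phi>. indicator {0..<2*pi} \<phi> *
       (\<integral>\<^sup>+v. indicator (cball 0 1 - {0}) v * indicator B (gam x (T v /\<^sub>R norm v) \<phi>) \<partial>lborel) \<partial>lborel)"
proof -
  have [measurable]: "T \<in> borel_measurable borel"
    using perp_isometryD(1)[OF T] by (rule linear_borel_measurable)
  have [measurable]: "cball (0::'b) 1 - {0} \<in> sets borel"
    by auto
  define I where "I \<phi> = (\<integral>\<^sup>+v. indicator (cball 0 1 - {0}) v * indicator B (gam x (T v /\<^sub>R norm v) \<phi>) \<partial>lborel)"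
    for \<phi>
  have [measurable]: "I \<in> borel_measurable borel"
    unfolding I_def gam_def by measurable
  have upper: "emeasure lborel (unit_cone B) \<le> (\<integral>\<^sup>+\<phi>. indicator {0<..<pi} \<phi> * I \<phi> \<partial>lborel)"
    unfolding I_def using assms by (rule emeasure_unit_cone_le_half_circles)
  have "emeasure lborel (unit_cone B) \<le> (\<integral>\<^sup>+\<phi>. indicator {0<..<pi} \<phi> *
      (\<integral>\<^sup>+v. indicator (cball 0 1 - {0}) v * indicator B (gam x ((- T v) /\<^sub>R norm v) \<phi>) \<partial>lborel) \<partial>lborel)"
    using emeasure_unit_cone_le_half_circles[OF assms(1) perp_isometry_uminus[OF T] assms(3,4)] by simp
  also have "\<dots> = (\<integral>\<^sup>+\<phi>. (\<lambda>\<theta>. indicator {pi<..<2*pi} \<theta> * I \<theta>) (2 * pi - \<phi>) \<partial>lborel)"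
  proof (intro nn_integral_cong)
    fix \<phi> :: real
    have gam_eq: "gam x ((- T v) /\<^sub>R norm v) \<phi> = gam x (T v /\<^sub>R norm v) (2 * pi - \<phi>)" for v
      using gam_uminus[of x "T v /\<^sub>R norm v" \<phi>] by simp
    have indicator_eq: "indicator {0<..<pi} \<phi> = (indicator {pi<..<2*pi} (2 * pi - \<phi>) :: ennreal)"
      by (auto simp: indicator_def)
    show "indicator {0<..<pi} \<phi> *
        (\<integral>\<^sup>+v. indicator (cball 0 1 - {0}) v * indicator B (gam x ((- T v) /\<^sub>R norm v) \<phi>) \<partial>lborel) =
      indicator {pi<..<2*pi} (2 * pi - \<phi>) * I (2 * pi - \<phi>)"
      unfolding I_def gam_eq indicator_eq ..
  qed
  also have "\<dots> = (\<integral>\<^sup>+\<theta>. indicator {pi<..<2*pi} \<theta> * I \<theta> \<partial>lborel)"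
    by (rule nn_integral_lborel_reflect) measurable
  finally have lower: "emeasure lborel (unit_cone B) \<le> (\<integral>\<^sup>+\<theta>. indicator {pi<..<2*pi} \<theta> * I \<theta> \<partial>lborel)" .
  have "2 * emeasure lborel (unit_cone B) \<le>
      (\<integral>\<^sup>+\<phi>. indicator {0<..<pi} \<phi> * I \<phi> \<partial>lborel) + (\<integral>\<^sup>+\<theta>. indicator {pi<..<2*pi} \<theta> * I \<theta> \<partial>lborel)"
    unfolding mult_2[of "emeasure lborel (unit_cone B)"] by (rule add_mono[OF upper lower])
  also have "\<dots> = (\<integral>\<^sup>+\<phi>. indicator {0<..<pi} \<phi> * I \<phi> + indicator {pi<..<2*pi} \<phi> * I \<phi> \<partial>lborel)"
    by (rule nn_integral_add[symmetric]) measurable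
  also have "\<dots> \<le> (\<integral>\<^sup>+\<phi>. indicator {0..<2*pi} \<phi> * I \<phi> \<partial>lborel)"
    by (intro nn_integral_mono) (simp split: split_indicator)
  finally show ?thesis
    unfolding I_def .
qed

lemma nn_integral_great_circles:
  fixes x :: "'a::euclidean_space" and T :: "'b::euclidean_space \<Rightarrow> 'a"
  assumes "linear T" and [measurable]: "B \<in> sets borel"
  shows "(\<integral>\<^sup>+v. (\<integral>\<^sup>+\<theta>. indicator {0..<2*pi} \<theta> * indicator B (gam x v \<theta>) \<partial>lborel) \<partial>great_sphere_measure T) =
    of_nat DIM('b) * (\<integral>\<^sup>+\<theta>. indicator {0..<2*pi} \<theta> *
       (\<integral>\<^sup>+u. indicator (cball 0 1 - {0}) u * indicator B (gam x (T u /\<^sub>R norm u) \<theta>) \<partial>lborel) \<partial>lborel)"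
proof -
  have [measurable]: "T \<in> borel_measurable borel"
    using \<open>linear T\<close> by (rule linear_borel_measurable)
  have [measurable]: "cball (0::'b) 1 - {0} \<in> sets borel"
    by auto
  define h where "h v = (\<integral>\<^sup>+\<theta>. indicator {0..<2*pi} \<theta> * indicator B (gam x v \<theta>) \<partial>lborel)" for v
  have h_meas [measurable]: "h \<in> borel_measurable borel"
    unfolding h_def gam_def by measurable
  have "(\<integral>\<^sup>+u. indicator (cball 0 1 - {0}) u * h (T (u /\<^sub>R norm u)) \<partial>lborel) =
      (\<integral>\<^sup>+u. (\<integral>\<^sup>+\<theta>. indicator (cball 0 1 - {0}) u *
         (indicator {0..<2*pi} \<theta> * indicator B (gam x (T u /\<^sub>R norm u) \<theta>)) \<partial>lborel) \<partial>lborel)"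
  proof (rule nn_integral_cong)
    fix u :: 'b
    show "indicator (cball 0 1 - {0}) u * h (T (u /\<^sub>R norm u)) = (\<integral>\<^sup>+\<theta>. indicator (cball 0 1 - {0}) u *
        (indicator {0..<2*pi} \<theta> * indicator B (gam x (T u /\<^sub>R norm u) \<theta>)) \<partial>lborel)"
      unfolding h_def linear_scale[OF \<open>linear T\<close>]
      by (rule nn_integral_cmult[symmetric]) (unfold gam_def, measurable)
  qed
  also have "\<dots> = (\<integral>\<^sup>+\<theta>. (\<integral>\<^sup>+u. indicator (cball 0 1 - {0}) u *
      (indicator {0..<2*pi} \<theta> * indicator B (gam x (T u /\<^sub>R norm u) \<theta>)) \<partial>lborel) \<partial>lborel)"
    by (rule lborel_pair.Fubini'[symmetric]) (unfold gam_def, measurable)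
  also have "\<dots> = (\<integral>\<^sup>+\<theta>. indicator {0..<2*pi} \<theta> *
      (\<integral>\<^sup>+u. indicator (cball 0 1 - {0}) u * indicator B (gam x (T u /\<^sub>R norm u) \<theta>) \<partial>lborel) \<partial>lborel)"
  proof (rule nn_integral_cong)
    fix \<theta> :: real
    have "(\<integral>\<^sup>+u. indicator (cball 0 1 - {0}) u * (indicator {0..<2*pi} \<theta> * indicator B (gam x (T u /\<^sub>R norm u) \<theta>)) \<partial>lborel) =
        (\<integral>\<^sup>+u. indicator {0..<2*pi} \<theta> * (indicator (cball 0 1 - {0}) u * indicator B (gam x (T u /\<^sub>R norm u) \<theta>)) \<partial>lborel)"
      by (simp only: mult.left_commute)
    also have "\<dots> = indicator {0..<2*pi} \<theta> *
        (\<integral>\<^sup>+u. indicator (cball 0 1 - {0}) u * indicator B (gam x (T u /\<^sub>R norm u) \<theta>) \<partial>lborel)"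
      by (rule nn_integral_cmult) (unfold gam_def, measurable)
    finally show "(\<integral>\<^sup>+u. indicator (cball 0 1 - {0}) u * (indicator {0..<2*pi} \<theta> * indicator B (gam x (T u /\<^sub>R norm u) \<theta>)) \<partial>lborel) =
        indicator {0..<2*pi} \<theta> * (\<integral>\<^sup>+u. indicator (cball 0 1 - {0}) u * indicator B (gam x (T u /\<^sub>R norm u) \<theta>) \<partial>lborel)" .
  qed
  finally show ?thesis
    using nn_integral_great_sphere_measure[OF \<open>linear T\<close> h_meas] by (simp add: h_def)
qed

lemma emeasure_sphere_measure_le_great_circles:
  fixes x :: "'a::euclidean_space" and T :: "'b::euclidean_space \<Rightarrow> 'a"
  assumes "norm x = 1" and T: "perp_isometry x T" and dim: "DIM('a) = DIM('b) + 1"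
    and [measurable]: "B \<in> sets borel" and "B \<subseteq> sphere 0 1"
  shows "emeasure sphere_measure B \<le>
    (\<integral>\<^sup>+v. (\<integral>\<^sup>+\<theta>. indicator {0..<2*pi} \<theta> * indicator B (gam x v \<theta>) \<partial>lborel) \<partial>great_sphere_measure T)"
proof -
  have "emeasure sphere_measure B = of_nat (DIM('b) + 1) * emeasure lborel (unit_cone B)"
    using assms(4,5) by (simp add: emeasure_sphere_measure dim)
  also have "\<dots> \<le> of_nat (DIM('b) * 2) * emeasure lborel (unit_cone B)"
    using DIM_positive[where 'a='b] by (intro mult_right_mono of_nat_mono) auto
  also have "\<dots> = of_nat DIM('b) * (2 * emeasure lborel (unit_cone B))"
    by (simp add: ac_simps)
  also have "\<dots> \<le> of_nat DIM('b) * (\<integral>\<^sup>+\<theta>. indicator {0..<2*pi} \<theta> *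
      (\<integral>\<^sup>+u. indicator (cball 0 1 - {0}) u * indicator B (gam x (T u /\<^sub>R norm u) \<theta>) \<partial>lborel) \<partial>lborel)"
    using assms(1-4) by (intro mult_left_mono emeasure_unit_cone_le_circles) auto
  also have "\<dots> = (\<integral>\<^sup>+v. (\<integral>\<^sup>+\<theta>. indicator {0..<2*pi} \<theta> * indicator B (gam x v \<theta>) \<partial>lborel) \<partial>great_sphere_measure T)"
    using perp_isometryD(1)[OF T] by (simp add: nn_integral_great_circles)
  finally show ?thesis .
qed

lemma nn_integral_initial_segment_ge:
  fixes F :: "real \<Rightarrow> ennreal"
  assumes "0 \<le> c" "c \<le> a" and lower: "\<And>t. 0 \<le> t \<Longrightarrow> t < c \<Longrightarrow> G \<le> F t"
  shows "ennreal (c / a) * G \<le> ennreal (1 / a) * (\<integral>\<^sup>+t. indicator {0..a} t * F t \<partial>lborel)"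
proof -
  have "ennreal (c / a) = ennreal (1 / a) * ennreal c"
    using assms(1,2) by (subst ennreal_mult[symmetric]) auto
  then have "ennreal (c / a) * G = ennreal (1 / a) * ((\<integral>\<^sup>+t. indicator {0..<c} t \<partial>lborel) * G)"
    using assms(1) by (simp add: mult.assoc)
  also have "\<dots> = ennreal (1 / a) * (\<integral>\<^sup>+t. indicator {0..<c} t * G \<partial>lborel)"
    by (simp add: nn_integral_multc)
  also have "\<dots> \<le> ennreal (1 / a) * (\<integral>\<^sup>+t. indicator {0..a} t * F t \<partial>lborel)"
    using assms by (intro mult_left_mono nn_integral_mono) (auto simp: indicator_def)
  finally show ?thesis .
qed

lemma great_circles_le_Lset:
  assumes "\<And>y. y \<in> C \<Longrightarrow> t < p y"
  shows "(\<integral>\<^sup>+v. (\<integral>\<^sup>+\<theta>. indicator {0..<2*pi} \<theta> * indicator (A \<inter> C) (gam x v \<theta>) \<partial>lborel) \<partial>M) \<le>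
    (\<integral>\<^sup>+v. (\<integral>\<^sup>+\<theta>. indicator (Lset p x v t) \<theta> * indicator A (gam x v \<theta>) \<partial>lborel) \<partial>M)"
  using assms by (intro nn_integral_mono) (auto simp: Lset_def split: split_indicator)

lemma inf_sup_ratio_bounds:
  fixes p :: "'a \<Rightarrow> real"
  assumes "x \<in> S" "C \<subseteq> S" "C \<noteq> {}" and pos: "\<And>y. y \<in> S \<Longrightarrow> 0 < p y"
    and "0 < (INF y\<in>C. p y)" "bdd_above (p ` S)"
  defines "\<beta> \<equiv> (INF y\<in>C. p y) / (SUP y\<in>S. p y)"
  shows "0 \<le> \<beta>" "\<beta> * p x \<le> p x" "\<And>y. y \<in> C \<Longrightarrow> \<beta> * p x \<le> p y"
proof -
  have inf_le: "(INF y\<in>C. p y) \<le> p y" if "y \<in> C" for y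
    using that assms(2) pos by (intro cINF_lower bdd_belowI[of _ 0]) (auto intro: less_imp_le)
  have le_sup: "p y \<le> (SUP y\<in>S. p y)" if "y \<in> S" for y
    using that \<open>bdd_above (p ` S)\<close> by (rule cSUP_upper)
  have "0 < (SUP y\<in>S. p y)"
    using le_sup[OF \<open>x \<in> S\<close>] pos[OF \<open>x \<in> S\<close>] by linarith
  moreover obtain c where "c \<in> C" using \<open>C \<noteq> {}\<close> by blast
  ultimately have "\<beta> \<le> 1" "0 \<le> \<beta>"
    using inf_le[of c] le_sup[of c] \<open>C \<subseteq> S\<close> \<open>0 < (INF y\<in>C. p y)\<close> by (auto simp: \<beta>_def)
  then show "0 \<le> \<beta>" "\<beta> * p x \<le> p x"
    using pos[OF \<open>x \<in> S\<close>] by (auto simp: mult_le_cancel_right1)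
  have "\<beta> * p x = (INF y\<in>C. p y) * (p x / (SUP y\<in>S. p y))"
    by (simp add: \<beta>_def)
  also have "\<dots> \<le> (INF y\<in>C. p y)"
    using le_sup[OF \<open>x \<in> S\<close>] \<open>0 < (SUP y\<in>S. p y)\<close> \<open>0 < (INF y\<in>C. p y)\<close>
    by (intro mult_left_le) auto
  finally show "\<beta> * p x \<le> p y" if "y \<in> C" for y
    using inf_le[OF that] by linarith
qed

theorem mainTheorem5:
  fixes p :: "'a::euclidean_space \<Rightarrow> real" and C :: "'a set"
  assumes dim_a: "DIM('a) = DIM('b::euclidean_space) + 1"
    and d3: "DIM('a) \<ge> 3"
    and p_meas: "p \<in> borel_measurable (sphere_measure :: 'a measure)"
    and p_pos: "\<And>x. x \<in> sphere 0 1 \<Longrightarrow> p x > 0"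
    and int_pos: "(\<integral>\<^sup>+ x. ennreal (p x) \<partial>(sphere_measure :: 'a measure)) > 0"
    and int_fin: "(\<integral>\<^sup>+ x. ennreal (p x) \<partial>(sphere_measure :: 'a measure)) < \<infinity>"
    and C_meas: "C \<in> sets (sphere_measure :: 'a measure)"
    and C_pos: "emeasure (sphere_measure :: 'a measure) C > 0"
    and inf_pos: "(INF y\<in>C. p y) > 0"
    and sup_fin: "bdd_above (p ` sphere 0 1)"
  shows "\<forall>x \<in> sphere 0 1. \<forall>A \<in> sets (sphere_measure :: 'a measure).
           \<forall>T :: 'b \<Rightarrow> 'a. perp_isometry x T \<longrightarrow>
      ennreal (1 / p x) *
        (\<integral>\<^sup>+ t. indicator {0..p x} t *
           (\<integral>\<^sup>+ v. (\<integral>\<^sup>+ \<theta>. indicator (Lset p x v t) \<theta> * indicator A (gam x v \<theta>) \<partial>lborel)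
              \<partial>great_sphere_measure T) \<partial>lborel)
      \<ge> ennreal ((INF y\<in>C. p y) / (SUP y\<in>sphere 0 1. p y)) *
          emeasure (sphere_measure :: 'a measure) (A \<inter> C)"
proof (intro ballI allI impI)
  fix x :: 'a and A :: "'a set" and T :: "'b \<Rightarrow> 'a"
  assume x: "x \<in> sphere 0 1" and A: "A \<in> sets sphere_measure" and T: "perp_isometry x T"
  let ?I = "\<lambda>t. \<integral>\<^sup>+v. (\<integral>\<^sup>+\<theta>. indicator (Lset p x v t) \<theta> * indicator A (gam x v \<theta>) \<partial>lborel) \<partial>great_sphere_measure T"
  let ?G = "\<integral>\<^sup>+v. (\<integral>\<^sup>+\<theta>. indicator {0..<2*pi} \<theta> * indicator (A \<inter> C) (gam x v \<theta>) \<partial>lborel) \<partial>great_sphere_measure T"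
  define \<beta> where "\<beta> = (INF y\<in>C. p y) / (SUP y\<in>sphere 0 1. p y)"
  have "C \<noteq> {}" using C_pos by auto
  then have \<beta>: "0 \<le> \<beta>" "\<beta> * p x \<le> p x" "\<And>y. y \<in> C \<Longrightarrow> \<beta> * p x \<le> p y"
    using inf_sup_ratio_bounds[OF x sets_sphere_measureD(2)[OF C_meas] _ p_pos inf_pos sup_fin]
    by (simp_all add: \<beta>_def)
  have "ennreal \<beta> * emeasure sphere_measure (A \<inter> C) \<le> ennreal \<beta> * ?G"
    using sets_sphere_measureD[OF A] sets_sphere_measureD[OF C_meas] x dim_a T
    by (intro mult_left_mono emeasure_sphere_measure_le_great_circles) auto
  also have "\<dots> = ennreal (\<beta> * p x / p x) * ?G"
    using p_pos[OF x] by simp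
  also have "\<dots> \<le> ennreal (1 / p x) * (\<integral>\<^sup>+t. indicator {0..p x} t * ?I t \<partial>lborel)"
    using \<beta> p_pos[OF x]
    by (intro nn_integral_initial_segment_ge great_circles_le_Lset) (auto intro: less_le_trans)
  finally show "ennreal (1 / p x) * (\<integral>\<^sup>+t. indicator {0..p x} t * ?I t \<partial>lborel) \<ge>
      ennreal ((INF y\<in>C. p y) / (SUP y\<in>sphere 0 1. p y)) * emeasure sphere_measure (A \<inter> C)"
    by (simp add: \<beta>_def)
qed

end
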